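(* Let $P(\lambda)=\begin{bmatrix} A(\lambda) & B(\lambda)\\ -C(\lambda) & D(\lambda)\end{bmatrix}$ be a polynomial system matrix of a rational matrix $G(\lambda)\in\mathbb F(\lambda)^{p\times m}$, with $A(\lambda)\in\mathbb F[\lambda]^{n\times n}$. (a) If $A(\lambda)$ and $C(\lambda)$ are right coprime, $A(\lambda)^{-1}B(\lambda)$ is proper and $\begin{bmatrix} H_1(\lambda)\\ H_2(\lambda)\end{bmatrix}\in\mathbb F[\lambda]^{(n+m)\times l}$ is a right minimal basis of $P(\lambda)$, then $H_2(\lambda)$ is a right minimal basis of $G(\lambda)$ and $H_1(\lambda)=-A(\lambda)^{-1}B(\lambda)H_2(\lambda)$. Moreover, the right minimal indices of $P(\lambda)$ and $G(\lambda)$ are the same. (b) If $A(\lambda)$ and $B(\lambda)$ are left coprime, $C(\lambda)A(\lambda)^{-1}$ is proper and $\begin{bmatrix} H_1(\lambda)\\ H_2(\lambda)\end{bmatrix}\in\mathbb F[\lambda]^{(n+p)\times q}$ is a left minimal basis of $P(\lambda)$, then $H_2(\lambda)$ is a left minimal basis of $G(\lambda)$ and $H_1(\lambda)=(C(\lambda)A(\lambda)^{-1})^TH_2(\lambda)$. Moreover, the left minimal indices of $P(\lambda)$ and $G(\lambda)$ are the same.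
   Context: $\mathbb F$ is an arbitrary field, $\overline{\mathbb F}$ its algebraic closure. A polynomial system matrix of $G(\lambda)\in\mathbb F(\lambda)^{p\times m}$ is a polynomial matrix $P(\lambda)=\begin{bmatrix} A(\lambda) & B(\lambda)\\ -C(\lambda) & D(\lambda)\end{bmatrix}$ with $A(\lambda)\in\mathbb F[\lambda]^{n\times n}$ regular, $B\in\mathbb F[\lambda]^{n\times m}$, $C\in\mathbb F[\lambda]^{p\times n}$, $D\in\mathbb F[\lambda]^{p\times m}$, and $G=D+CA^{-1}B$. Polynomial matrices $A\in\mathbb F[\lambda]^{n\times n}$, $C\in\mathbb F[\lambda]^{p\times n}$ are right coprime if every common right divisor is unimodular (equivalently $\begin{bmatrix}A(\lambda_0)\\ C(\lambda_0)\end{bmatrix}$ has full column rank for all $\lambda_0\in\overline{\mathbb F}$); $A,B$ are left coprime if $A^T,B^T$ are right coprime. A rational matrix is proper if every entry has numerator degree at most denominator degree. For a subspace $\mathcal V\subseteq\mathbb F(\lambda)^k$, the order of a polynomial basis is the sum of the degrees of its vectors; a minimal basis is a polynomial basis of least order; the minimal indices of $\mathcal V$ are the degrees of the vectors of a minimal basis (well defined). A polynomial matrix is a right (resp. left) minimal basis of a rational matrix $G$ if its columns form a minimal basis of $\mathcal N_r(G)=\{x: Gx=0\}$ (resp. $\mathcal N_\ell(G)=\{x: x^TG=0\}$); the right (left) minimal indices of $G$ are the minimal indices of $\mathcal N_r(G)$ ($\mathcal N_\ell(G)$). *)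

theory Defs
  imports "HOL-Computational_Algebra.Polynomial" "HOL-Computational_Algebra.Fraction_Field"
    "HOL-Library.Multiset" "Jordan_Normal_Form.Determinant"
begin

type_synonym 'a ratf = "'a poly fract"

definition to_ratf :: "'a::field poly \<Rightarrow> 'a ratf" where
  "to_ratf p = Fract p 1"

definition ratmat :: "'a::field poly mat \<Rightarrow> 'a ratf mat" where
  "ratmat M = map_mat to_ratf M"

definition unimodular :: "'a::field poly mat \<Rightarrow> bool" where
  "unimodular U \<longleftrightarrow> square_mat U \<and> is_unit (det U)"

definition right_coprime :: "'a::field poly mat \<Rightarrow> 'a poly mat \<Rightarrow> bool" where
  "right_coprime A C \<longleftrightarrow>
     (\<forall>R X Y. R \<in> carrier_mat (dim_col A) (dim_col A) \<and>
              X \<in> carrier_mat (dim_row A) (dim_col A) \<and>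
              Y \<in> carrier_mat (dim_row C) (dim_col A) \<and>
              A = X * R \<and> C = Y * R \<longrightarrow> unimodular R)"

definition left_coprime :: "'a::field poly mat \<Rightarrow> 'a poly mat \<Rightarrow> bool" where
  "left_coprime A B \<longleftrightarrow> right_coprime (transpose_mat A) (transpose_mat B)"

definition proper_ratf :: "'a::field ratf \<Rightarrow> bool" where
  "proper_ratf r \<longleftrightarrow> (\<exists>a b. b \<noteq> 0 \<and> r = Fract a b \<and> degree a \<le> degree b)"

definition proper_mat :: "'a::field ratf mat \<Rightarrow> bool" where
  "proper_mat M \<longleftrightarrow> (\<forall>i < dim_row M. \<forall>j < dim_col M. proper_ratf (M $$ (i, j)))"

definition mat_inv :: "'a::field ratf mat \<Rightarrow> 'a ratf mat" where
  "mat_inv M = (SOME X. X \<in> carrier_mat (dim_row M) (dim_row M) \<and> inverts_mat M X \<and> inverts_mat X M)"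

definition system_matrix :: "'a::field poly mat \<Rightarrow> 'a poly mat \<Rightarrow> 'a poly mat \<Rightarrow> 'a poly mat \<Rightarrow> 'a poly mat" where
  "system_matrix A B C D = four_block_mat A B (- C) D"

definition is_polynomial_system_matrix ::
  "nat \<Rightarrow> nat \<Rightarrow> nat \<Rightarrow> 'a::field poly mat \<Rightarrow> 'a poly mat \<Rightarrow> 'a poly mat \<Rightarrow> 'a poly mat \<Rightarrow> 'a ratf mat \<Rightarrow> bool" where
  "is_polynomial_system_matrix n m p A B C D G \<longleftrightarrow>
     A \<in> carrier_mat n n \<and> B \<in> carrier_mat n m \<and> C \<in> carrier_mat p n \<and> D \<in> carrier_mat p m \<and>
     det A \<noteq> 0 \<and> G \<in> carrier_mat p m \<and>
     G = ratmat D + ratmat C * mat_inv (ratmat A) * ratmat B"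

definition right_null :: "'a::field ratf mat \<Rightarrow> 'a ratf vec set" where
  "right_null M = {x \<in> carrier_vec (dim_col M). M *\<^sub>v x = 0\<^sub>v (dim_row M)}"

definition left_null :: "'a::field ratf mat \<Rightarrow> 'a ratf vec set" where
  "left_null M = {x \<in> carrier_vec (dim_row M). transpose_mat M *\<^sub>v x = 0\<^sub>v (dim_col M)}"

definition vdegree :: "'a::zero poly vec \<Rightarrow> nat" where
  "vdegree v = Max (insert 0 {degree (v $ i) | i. i < dim_vec v})"

definition col_degrees :: "'a::zero poly mat \<Rightarrow> nat multiset" where
  "col_degrees H = mset (map vdegree (cols H))"

definition order :: "'a::zero poly mat \<Rightarrow> nat" where
  "order H = sum_list (map vdegree (cols H))"

definition poly_basis :: "nat \<Rightarrow> 'a::field ratf vec set \<Rightarrow> 'a poly mat \<Rightarrow> bool" where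
  "poly_basis k V H \<longleftrightarrow> dim_row H = k \<and>
     (\<forall>c \<in> carrier_vec (dim_col H). ratmat H *\<^sub>v c = 0\<^sub>v k \<longrightarrow> c = 0\<^sub>v (dim_col H)) \<and>
     V = {ratmat H *\<^sub>v c | c. c \<in> carrier_vec (dim_col H)}"

definition minimal_basis :: "nat \<Rightarrow> 'a::field ratf vec set \<Rightarrow> 'a poly mat \<Rightarrow> bool" where
  "minimal_basis k V H \<longleftrightarrow> poly_basis k V H \<and> (\<forall>H'. poly_basis k V H' \<longrightarrow> order H \<le> order H')"

definition minimal_indices :: "nat \<Rightarrow> 'a::field ratf vec set \<Rightarrow> nat multiset" where
  "minimal_indices k V = (THE M. \<exists>H. minimal_basis k V H \<and> col_degrees H = M)"

definition right_minimal_basis :: "'a::field ratf mat \<Rightarrow> 'a poly mat \<Rightarrow> bool" where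
  "right_minimal_basis G H \<longleftrightarrow> minimal_basis (dim_col G) (right_null G) H"

definition left_minimal_basis :: "'a::field ratf mat \<Rightarrow> 'a poly mat \<Rightarrow> bool" where
  "left_minimal_basis G H \<longleftrightarrow> minimal_basis (dim_row G) (left_null G) H"

definition right_minimal_indices :: "'a::field ratf mat \<Rightarrow> nat multiset" where
  "right_minimal_indices G = minimal_indices (dim_col G) (right_null G)"

definition left_minimal_indices :: "'a::field ratf mat \<Rightarrow> nat multiset" where
  "left_minimal_indices G = minimal_indices (dim_row G) (left_null G)"

end

theory Submission
  imports Defs
begin

text \<open>If P x = 0 for x = (x1, x2), the first block row forces x1 = - A^-1 B x2, and the second
  then reads G x2 = 0. So the right null space of P is the graph of x2 \<mapsto> - A^-1 B x2 over that of G,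
  and the polynomial bases [H1; H2] of the former are exactly the stacks of the polynomial bases H2 of the
  latter with H1 = - A^-1 B H2, provided this H1 is polynomial. Right coprimeness of A and C guarantees
  that: a rational vector h with A h and C h polynomial is itself polynomial, since an irreducible factor
  of a denominator of h would split off from A and C as a common right divisor of non-unit determinant.
  Properness of A^-1 B makes the column degrees of [H1; H2] those of H2, so the correspondence preserves
  orders, minimality and column degrees. Part (b) is part (a) for the transposed system matrix
  [A^T, - C^T; B^T, D^T] = P^T, whose transfer function is G^T.\<close>

interpretation to_ratf: inj_idom_hom "to_ratf :: 'a::field poly \<Rightarrow> 'a ratf"
proof unfold_locales
  fix x y :: "'a poly"
  show "to_ratf (x + y) = to_ratf x + to_ratf y" "to_ratf (x * y) = to_ratf x * to_ratf y"
    by (simp_all add: to_ratf_def)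
  show "to_ratf 1 = 1" "to_ratf 0 = 0"
    by (simp_all add: to_ratf_def fract_collapse)
  show "to_ratf x = 0 \<Longrightarrow> x = 0"
    by (simp add: to_ratf_def Zero_fract_def eq_fract)
qed

section \<open>Matrices of rational functions\<close>

lemma ratmat_index [simp]:
  "i < dim_row M \<Longrightarrow> j < dim_col M \<Longrightarrow> ratmat M $$ (i, j) = to_ratf (M $$ (i, j))"
  unfolding ratmat_def by simp

lemma ratmat_dims [simp]: "dim_row (ratmat M) = dim_row M" "dim_col (ratmat M) = dim_col M"
  unfolding ratmat_def by auto

lemma ratmat_carrier [simp]: "ratmat M \<in> carrier_mat a b \<longleftrightarrow> M \<in> carrier_mat a b"
  unfolding carrier_mat_def by simp

lemma ratmat_mult_vec:
  "A \<in> carrier_mat a b \<Longrightarrow> v \<in> carrier_vec b \<Longrightarrow>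
    ratmat A *\<^sub>v map_vec to_ratf v = map_vec to_ratf (A *\<^sub>v v)"
  unfolding ratmat_def by (rule to_ratf.mult_mat_vec_hom[symmetric])

lemma ratmat_mult_vec_carrier: "K \<in> carrier_mat k l \<Longrightarrow> ratmat K *\<^sub>v c \<in> carrier_vec k"
  by (metis carrier_matD(1) carrier_vecI dim_mult_mat_vec ratmat_dims(1))

lemma ratmat_uminus: "ratmat (- M) = - ratmat M"
  unfolding ratmat_def by (intro eq_matI) (auto simp: to_ratf.hom_uminus)

lemma ratmat_transpose: "ratmat (transpose_mat M) = transpose_mat (ratmat M)"
  unfolding ratmat_def by (rule map_mat_transpose[symmetric])

lemma ratmat_append_rows:
  "K1 \<in> carrier_mat a l \<Longrightarrow> K2 \<in> carrier_mat b l \<Longrightarrow> ratmat (K1 @\<^sub>r K2) = ratmat K1 @\<^sub>r ratmat K2"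
  unfolding ratmat_def append_rows_def by (intro eq_matI) auto

lemma ratmat_append_rows_mult_vec:
  assumes "K1 \<in> carrier_mat n l" "K2 \<in> carrier_mat m l" "c \<in> carrier_vec l"
  shows "ratmat (K1 @\<^sub>r K2) *\<^sub>v c = (ratmat K1 *\<^sub>v c) @\<^sub>v (ratmat K2 *\<^sub>v c)"
  unfolding ratmat_append_rows[OF assms(1,2)] using assms by (intro mat_mult_append) auto

lemma ratmat_system_matrix:
  assumes "A \<in> carrier_mat n n" "B \<in> carrier_mat n m" "C \<in> carrier_mat p n" "D \<in> carrier_mat p m"
  shows "ratmat (system_matrix A B C D) = four_block_mat (ratmat A) (ratmat B) (- ratmat C) (ratmat D)"
  unfolding system_matrix_def ratmat_def using assms by (intro eq_matI) (auto simp: to_ratf.hom_uminus)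

lemma polynomial_ratmatE:
  assumes "Q \<in> carrier_mat a l" and "\<And>i j. i < a \<Longrightarrow> j < l \<Longrightarrow> Q $$ (i, j) \<in> range to_ratf"
  obtains K where "K \<in> carrier_mat a l" "ratmat K = Q"
proof
  let ?K = "mat a l (\<lambda>(i, j). inv_into UNIV to_ratf (Q $$ (i, j)))"
  show "?K \<in> carrier_mat a l" by simp
  show "ratmat ?K = Q" unfolding ratmat_def using assms by (intro eq_matI) (auto simp: f_inv_into_f)
qed

lemma append_rows_split:
  assumes "K \<in> carrier_mat (n + m) l"
  obtains K1 K2 where "K1 \<in> carrier_mat n l" "K2 \<in> carrier_mat m l" "K = K1 @\<^sub>r K2"
proof
  show "mat n l (\<lambda>(i, j). K $$ (i, j)) \<in> carrier_mat n l" "mat m l (\<lambda>(i, j). K $$ (n + i, j)) \<in> carrier_mat m l"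
    by auto
  show "K = mat n l (\<lambda>(i, j). K $$ (i, j)) @\<^sub>r mat m l (\<lambda>(i, j). K $$ (n + i, j))"
    unfolding append_rows_def using assms by (intro eq_matI) auto
qed

lemma dim_append_rows [simp]:
  assumes "K1 \<in> carrier_mat n l" "K2 \<in> carrier_mat m l"
  shows "dim_row (K1 @\<^sub>r K2) = n + m" "dim_col (K1 @\<^sub>r K2) = l"
  using carrier_append_rows[OF assms] by auto

lemma mat_eq_iff_mult_vec:
  assumes "X \<in> carrier_mat a l" "Y \<in> carrier_mat a l"
    and "\<And>c. c \<in> carrier_vec l \<Longrightarrow> X *\<^sub>v c = Y *\<^sub>v c"
  shows "X = (Y :: 'b::semiring_1 mat)"
proof (rule mat_col_eqI)
  fix j assume "j < dim_col Y"
  hence j: "j < l" using assms by auto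
  have col: "M *\<^sub>v unit_vec l j = col M j" if "M \<in> carrier_mat a l" for M :: "'b mat"
    using that j by (intro eq_vecI) (auto simp: scalar_prod_right_unit)
  show "col X j = col Y j" using assms(3)[of "unit_vec l j"] col assms(1,2) j by simp
qed (use assms in auto)

lemma mat_inv_inverts:
  fixes M :: "'a::field ratf mat"
  assumes M: "M \<in> carrier_mat n n" and "det M \<noteq> 0"
  shows "mat_inv M \<in> carrier_mat n n" "M * mat_inv M = 1\<^sub>m n" "mat_inv M * M = 1\<^sub>m n"
proof -
  obtain X where "X \<in> carrier_mat n n" "X * M = 1\<^sub>m n" "M * X = 1\<^sub>m n"
    using det_non_zero_imp_unit[OF assms] unfolding Units_def ring_mat_def by auto
  hence "\<exists>X. X \<in> carrier_mat (dim_row M) (dim_row M) \<and> inverts_mat M X \<and> inverts_mat X M"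
    using M unfolding inverts_mat_def by auto
  from someI_ex[OF this]
  show "mat_inv M \<in> carrier_mat n n" "M * mat_inv M = 1\<^sub>m n" "mat_inv M * M = 1\<^sub>m n"
    using M unfolding mat_inv_def inverts_mat_def by auto
qed

lemma mat_inv_transpose:
  fixes M :: "'a::field ratf mat"
  assumes M: "M \<in> carrier_mat n n" and d: "det M \<noteq> 0"
  shows "mat_inv (transpose_mat M) = transpose_mat (mat_inv M)"
proof -
  have MT: "transpose_mat M \<in> carrier_mat n n" and dT: "det (transpose_mat M) \<noteq> 0"
    using M d det_transpose[OF M] by auto
  note X = mat_inv_inverts[OF MT dT] and Y = mat_inv_inverts[OF M d]
  have "transpose_mat M * transpose_mat (mat_inv M) = 1\<^sub>m n"
    using transpose_mult[OF Y(1) M] Y(3) by simp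
  hence "mat_inv (transpose_mat M) = mat_inv (transpose_mat M) * (transpose_mat M * transpose_mat (mat_inv M))"
    using X by simp
  also have "\<dots> = transpose_mat (mat_inv M)"
    using X Y MT by (simp flip: assoc_mult_mat)
  finally show ?thesis .
qed

lemma mult_mat_vec_uminus:
  "A \<in> carrier_mat a b \<Longrightarrow> v \<in> carrier_vec b \<Longrightarrow> A *\<^sub>v (- v) = - (A *\<^sub>v (v :: 'b::ring vec))"
  by (intro eq_vecI) auto

lemma add_eq_0_iff_vec:
  assumes "u \<in> carrier_vec n" "v \<in> carrier_vec n"
  shows "u + v = 0\<^sub>v n \<longleftrightarrow> v = - (u :: 'b::ab_group_add vec)"
proof
  assume "u + v = 0\<^sub>v n"
  thus "v = - u" using assms by (intro eq_vecI) (auto simp: vec_eq_iff add_eq_0_iff)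
qed (use assms in \<open>intro eq_vecI, auto\<close>)

lemma invertible_mult_vec_add_eq_0_iff:
  fixes M :: "'b::field mat"
  assumes M: "M \<in> carrier_mat n n" "Mi \<in> carrier_mat n n" "M * Mi = 1\<^sub>m n" "Mi * M = 1\<^sub>m n"
    and x: "x \<in> carrier_vec n" and y: "y \<in> carrier_vec n"
  shows "M *\<^sub>v x + y = 0\<^sub>v n \<longleftrightarrow> x = - (Mi *\<^sub>v y)"
proof
  assume "M *\<^sub>v x + y = 0\<^sub>v n"
  hence "M *\<^sub>v x = - y" using M x y by (auto simp: vec_eq_iff eq_neg_iff_add_eq_0)
  hence "Mi *\<^sub>v (M *\<^sub>v x) = - (Mi *\<^sub>v y)" using M y by (simp add: mult_mat_vec_uminus)
  thus "x = - (Mi *\<^sub>v y)" using M x by (simp flip: assoc_mult_mat_vec)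
next
  assume "x = - (Mi *\<^sub>v y)"
  hence "M *\<^sub>v x = - y" using M y by (simp add: mult_mat_vec_uminus flip: assoc_mult_mat_vec)
  thus "M *\<^sub>v x + y = 0\<^sub>v n" using y by (auto simp: vec_eq_iff)
qed

lemma poly_basis_iff:
  "poly_basis k V K \<longleftrightarrow> dim_row K = k \<and>
     (\<forall>c \<in> carrier_vec (dim_col K). ratmat K *\<^sub>v c = 0\<^sub>v k \<longrightarrow> c = 0\<^sub>v (dim_col K)) \<and>
     V = (\<lambda>c. ratmat K *\<^sub>v c) ` carrier_vec (dim_col K)"
  unfolding poly_basis_def by (auto simp: Setcompr_eq_image)

lemma poly_basis_mult_eq_0:
  assumes "poly_basis k (right_null M) K"
  shows "M * ratmat K = 0\<^sub>m (dim_row M) (dim_col K)"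
proof (rule mat_eq_iff_mult_vec[of _ "dim_row M" "dim_col K"])
  fix c :: "'a::field ratf vec" assume c: "c \<in> carrier_vec (dim_col K)"
  have span: "right_null M = (\<lambda>c. ratmat K *\<^sub>v c) ` carrier_vec (dim_col K)"
    using assms by (simp add: poly_basis_iff)
  have "ratmat K *\<^sub>v c \<in> right_null M" unfolding span by (rule imageI[OF c])
  hence dim: "dim_row K = dim_col M" and null: "M *\<^sub>v (ratmat K *\<^sub>v c) = 0\<^sub>v (dim_row M)"
    unfolding right_null_def carrier_vec_def by simp_all
  have "M \<in> carrier_mat (dim_row M) (dim_col M)" by auto
  moreover have "ratmat K \<in> carrier_mat (dim_col M) (dim_col K)" using dim by (intro carrier_matI) simp_all
  ultimately have "(M * ratmat K) *\<^sub>v c = M *\<^sub>v (ratmat K *\<^sub>v c)"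
    using c by (rule assoc_mult_mat_vec)
  also have "\<dots> = 0\<^sub>m (dim_row M) (dim_col K) *\<^sub>v c"
    unfolding null using c by (intro eq_vecI) auto
  finally show "(M * ratmat K) *\<^sub>v c = 0\<^sub>m (dim_row M) (dim_col K) *\<^sub>v c" .
qed auto

lemma left_minimal_basis_iff_transpose: "left_minimal_basis M H \<longleftrightarrow> right_minimal_basis (transpose_mat M) H"
  unfolding left_minimal_basis_def right_minimal_basis_def left_null_def right_null_def by simp

lemma left_minimal_indices_eq_transpose: "left_minimal_indices M = right_minimal_indices (transpose_mat M)"
  unfolding left_minimal_indices_def right_minimal_indices_def left_null_def right_null_def by simp

section \<open>Right coprime polynomial matrices\<close>

lemma right_coprimeD:
  assumes "right_coprime A C" "A \<in> carrier_mat n n" "C \<in> carrier_mat p n"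
    and "R \<in> carrier_mat n n" "X \<in> carrier_mat n n" "Y \<in> carrier_mat p n"
    and "A = X * R" "C = Y * R"
  shows "unimodular R"
  using assms unfolding right_coprime_def by (metis carrier_matD)

lemma poly_bezout_of_minimal_degree:
  fixes \<pi> u :: "'a::field poly"
  assumes pi0: "\<pi> \<noteq> 0" and nd: "\<not> \<pi> dvd u"
    and minimal: "\<And>g. g dvd \<pi> \<Longrightarrow> degree g > 0 \<Longrightarrow> degree \<pi> \<le> degree g"
  shows "\<exists>s t. s * u + t * \<pi> = 1"
proof -
  define S where "S = {s * u + t * \<pi> | s t. True}"
  have uS: "u \<in> S" unfolding S_def by (rule CollectI, rule exI[of _ 1], rule exI[of _ 0], simp)
  have piS: "\<pi> \<in> S" unfolding S_def by (rule CollectI, rule exI[of _ 0], rule exI[of _ 1], simp)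
  define k where "k = (LEAST k. \<exists>g \<in> S. g \<noteq> 0 \<and> degree g = k)"
  have "\<exists>g \<in> S. g \<noteq> 0 \<and> degree g = k"
    unfolding k_def by (rule LeastI[of _ "degree \<pi>"], use piS pi0 in auto)
  then obtain s0 t0 where g0: "s0 * u + t0 * \<pi> \<noteq> 0" and gk: "degree (s0 * u + t0 * \<pi>) = k"
    unfolding S_def by auto
  define g where "g = s0 * u + t0 * \<pi>"
  have least: "k \<le> degree g'" if "g' \<in> S" "g' \<noteq> 0" for g'
    unfolding k_def by (rule Least_le, use that in auto)
  \<comment> \<open>The element of least degree of the ideal generated by u and \<pi> divides all of its elements.\<close>
  have g_dvd: "g dvd x" if "x \<in> S" for x
  proof -
    from that obtain s t where x: "x = s * u + t * \<pi>" unfolding S_def by auto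
    have "x mod g = (s - (x div g) * s0) * u + (t - (x div g) * t0) * \<pi>"
      unfolding minus_div_mult_eq_mod[symmetric] x g_def by (simp add: algebra_simps)
    hence "x mod g \<in> S" unfolding S_def by auto
    moreover have "x mod g = 0 \<or> degree (x mod g) < degree g"
      using g0 degree_mod_less unfolding g_def by blast
    ultimately have "x mod g = 0" using least gk unfolding g_def by force
    thus ?thesis by (simp add: mod_eq_0_iff_dvd)
  qed
  have "degree g = 0"
  proof (rule ccontr)
    assume "degree g \<noteq> 0"
    with minimal g_dvd[OF piS] have "degree \<pi> \<le> degree g" by simp
    moreover from g_dvd[OF piS] obtain q where q: "\<pi> = g * q" by (elim dvdE)
    ultimately have "is_unit q" using pi0 by (auto simp: degree_mult_eq is_unit_iff_degree)
    hence "\<pi> dvd g" using q by simp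
    with g_dvd[OF uS] nd show False using dvd_trans by blast
  qed
  then obtain c where gc: "g = [:c:]" and "c \<noteq> 0" using g0 unfolding g_def
    by (metis degree_eq_zeroE pCons_0_0)
  hence "smult (inverse c) g = 1" by (simp add: one_pCons)
  hence "smult (inverse c) s0 * u + smult (inverse c) t0 * \<pi> = 1"
    unfolding g_def by (simp add: algebra_simps smult_add_right)
  thus ?thesis by blast
qed

lemma poly_bezout_divisor_exists:
  fixes d :: "'a::field poly"
  assumes "degree d > 0"
  obtains \<pi> where "\<pi> dvd d" "degree \<pi> > 0" "\<And>u. \<not> \<pi> dvd u \<Longrightarrow> \<exists>s t. s * u + t * \<pi> = 1"
proof -
  define k where "k = (LEAST k. \<exists>g. g dvd d \<and> degree g > 0 \<and> degree g = k)"
  have "\<exists>g. g dvd d \<and> degree g > 0 \<and> degree g = k"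
    unfolding k_def by (rule LeastI[of _ "degree d"], rule exI[of _ d], use assms in simp)
  then obtain \<pi> where \<pi>: "\<pi> dvd d" "degree \<pi> > 0" "degree \<pi> = k" by auto
  have "degree \<pi> \<le> degree g" if "g dvd \<pi>" "degree g > 0" for g
    unfolding \<pi>(3) k_def by (rule Least_le, use that dvd_trans[OF _ \<pi>(1)] in auto)
  with \<pi> poly_bezout_of_minimal_degree[of \<pi>] that show ?thesis by fastforce
qed

text \<open>If w $ i = 1 and \<pi> divides every entry of M w, then M = X * divisor_mat n i w \<pi>, where X is M
  with its i-th column replaced by M w / \<pi>.\<close>

definition divisor_mat :: "nat \<Rightarrow> nat \<Rightarrow> 'a::comm_ring_1 vec \<Rightarrow> 'a \<Rightarrow> 'a mat" where
  "divisor_mat n i w \<pi> =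
     mat n n (\<lambda>(r, c). if c = i then (if r = i then \<pi> else - w $ r) else of_bool (r = c))"

lemma divisor_mat_carrier: "divisor_mat n i w \<pi> \<in> carrier_mat n n"
  unfolding divisor_mat_def by auto

lemma det_divisor_mat:
  assumes i: "i < n"
  shows "det (divisor_mat n i w \<pi>) = \<pi>"
proof -
  let ?R = "divisor_mat n i w \<pi>"
  have "mat_delete ?R i i = 1\<^sub>m (n - 1)"
    by (rule eq_matI, auto simp: mat_delete_def divisor_mat_def)
  hence cof: "cofactor ?R i i = 1" by (simp add: cofactor_def)
  have "det ?R = (\<Sum>j<n. ?R $$ (i, j) * cofactor ?R i j)"
    by (rule laplace_expansion_row[OF divisor_mat_carrier i])
  also have "\<dots> = (\<Sum>j<n. if j = i then \<pi> * cofactor ?R i i else 0)"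
    by (rule sum.cong, use i in \<open>auto simp: divisor_mat_def\<close>)
  finally show ?thesis using i cof by simp
qed

lemma divisor_mat_right_factor:
  fixes M :: "'a::{idom_divide, algebraic_semidom} mat"
  assumes M: "M \<in> carrier_mat k n" and i: "i < n" and w: "w \<in> carrier_vec n" and "w $ i = 1"
    and dvd_Mw: "\<And>r. r < k \<Longrightarrow> \<pi> dvd (M *\<^sub>v w) $ r"
  obtains X where "X \<in> carrier_mat k n" "M = X * divisor_mat n i w \<pi>"
proof -
  define X where "X = mat k n (\<lambda>(r, c). if c = i then (M *\<^sub>v w) $ r div \<pi> else M $$ (r, c))"
  let ?R = "divisor_mat n i w \<pi>"
  have X: "X \<in> carrier_mat k n" unfolding X_def by auto
  have "M $$ (r, c) = (X * ?R) $$ (r, c)" if r: "r < k" and c: "c < n" for r c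
  proof -
    have XR: "(X * ?R) $$ (r, c) = (\<Sum>j<n. X $$ (r, j) * ?R $$ (j, c))"
      using r c X by (simp add: scalar_prod_def divisor_mat_def lessThan_atLeast0)
    show ?thesis
    proof (cases "c = i")
      case False
      have "(\<Sum>j<n. X $$ (r, j) * ?R $$ (j, c)) = (\<Sum>j<n. if j = c then X $$ (r, c) else 0)"
        by (rule sum.cong, use False c in \<open>auto simp: divisor_mat_def\<close>)
      thus ?thesis using XR c r False by (simp add: X_def)
    next
      case True
      have Xi: "X $$ (r, i) * \<pi> = (M *\<^sub>v w) $ r"
        using r i dvd_Mw[OF r] by (simp add: X_def)
      have "(M *\<^sub>v w) $ r = (\<Sum>j<n. M $$ (r, j) * w $ j)"
        using M w r by (simp add: scalar_prod_def lessThan_atLeast0)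
      also have "\<dots> = M $$ (r, i) + (\<Sum>j\<in>{..<n} - {i}. M $$ (r, j) * w $ j)"
        using sum.remove[of "{..<n}" i "\<lambda>j. M $$ (r, j) * w $ j"] i \<open>w $ i = 1\<close> by simp
      finally have Mw: "(M *\<^sub>v w) $ r = M $$ (r, i) + (\<Sum>j\<in>{..<n} - {i}. M $$ (r, j) * w $ j)" .
      have "(\<Sum>j<n. X $$ (r, j) * ?R $$ (j, i))
          = X $$ (r, i) * \<pi> + (\<Sum>j\<in>{..<n} - {i}. X $$ (r, j) * ?R $$ (j, i))"
        using sum.remove[of "{..<n}" i "\<lambda>j. X $$ (r, j) * ?R $$ (j, i)"] i
        by (simp add: divisor_mat_def)
      also have "(\<Sum>j\<in>{..<n} - {i}. X $$ (r, j) * ?R $$ (j, i))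
          = - (\<Sum>j\<in>{..<n} - {i}. M $$ (r, j) * w $ j)"
        unfolding sum_negf[symmetric] by (rule sum.cong, use r i in \<open>auto simp: divisor_mat_def X_def\<close>)
      finally show ?thesis using XR True Xi Mw by simp
    qed
  qed
  hence "M = X * ?R" using M X by (intro eq_matI, auto simp: divisor_mat_def)
  with X that show ?thesis by blast
qed

lemma right_coprime_prime_dvd_vec:
  fixes A C :: "'a::field poly mat"
  assumes A: "A \<in> carrier_mat n n" and C: "C \<in> carrier_mat p n" and cop: "right_coprime A C"
    and u: "u \<in> carrier_vec n"
    and deg: "degree \<pi> > 0" and bezout: "\<And>v. \<not> \<pi> dvd v \<Longrightarrow> \<exists>s t. s * v + t * \<pi> = 1"
    and dvd_A: "\<And>r. r < n \<Longrightarrow> \<pi> dvd (A *\<^sub>v u) $ r"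
    and dvd_C: "\<And>r. r < p \<Longrightarrow> \<pi> dvd (C *\<^sub>v u) $ r"
    and i: "i < n"
  shows "\<pi> dvd u $ i"
proof (rule ccontr)
  assume "\<not> \<pi> dvd u $ i"
  with bezout obtain s t where st: "s * u $ i + t * \<pi> = 1" by blast
  define w where "w = s \<cdot>\<^sub>v u + (t * \<pi>) \<cdot>\<^sub>v unit_vec n i"
  have w: "w \<in> carrier_vec n" and wi: "w $ i = 1" using u i st by (auto simp: w_def)
  \<comment> \<open>w is congruent to s u modulo \<pi>, so \<pi> still divides M w, but w is not divisible by \<pi>.\<close>
  have dvd_Mw: "\<pi> dvd (M *\<^sub>v w) $ r"
    if M: "M \<in> carrier_mat k n" and dvd_M: "\<And>r. r < k \<Longrightarrow> \<pi> dvd (M *\<^sub>v u) $ r" and r: "r < k" for M k r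
  proof -
    have "(M *\<^sub>v w) $ r = s * (M *\<^sub>v u) $ r + t * \<pi> * M $$ (r, i)"
    proof -
      have row: "row M r \<in> carrier_vec n" using M by (metis carrier_matD(2) row_carrier)
      have "(M *\<^sub>v w) $ r = row M r \<bullet> (s \<cdot>\<^sub>v u) + row M r \<bullet> ((t * \<pi>) \<cdot>\<^sub>v unit_vec n i)"
        unfolding w_def using M r u by (simp add: scalar_prod_add_distrib[OF row])
      also have "\<dots> = s * (M *\<^sub>v u) $ r + t * \<pi> * M $$ (r, i)"
        using M r u i by (simp add: scalar_prod_smult_distrib[OF row])
      finally show ?thesis .
    qed
    thus ?thesis using dvd_M[OF r] by simp
  qed
  obtain X where X: "X \<in> carrier_mat n n" "A = X * divisor_mat n i w \<pi>"
    using divisor_mat_right_factor[OF A i w wi dvd_Mw[OF A dvd_A]] .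
  obtain Y where Y: "Y \<in> carrier_mat p n" "C = Y * divisor_mat n i w \<pi>"
    using divisor_mat_right_factor[OF C i w wi dvd_Mw[OF C dvd_C]] .
  have "unimodular (divisor_mat n i w \<pi>)"
    by (rule right_coprimeD[OF cop A C divisor_mat_carrier X(1) Y(1) X(2) Y(2)])
  hence "is_unit \<pi>" unfolding unimodular_def det_divisor_mat[OF i] by simp
  with deg show False by (metis degree_0 is_unit_iff_degree less_irrefl)
qed

lemma right_coprime_dvd_vec:
  fixes A C :: "'a::field poly mat"
  assumes A: "A \<in> carrier_mat n n" and C: "C \<in> carrier_mat p n" and cop: "right_coprime A C"
  shows "u \<in> carrier_vec n \<Longrightarrow> d \<noteq> 0 \<Longrightarrow>
    (\<And>r. r < n \<Longrightarrow> d dvd (A *\<^sub>v u) $ r) \<Longrightarrow> (\<And>r. r < p \<Longrightarrow> d dvd (C *\<^sub>v u) $ r) \<Longrightarrow>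
    i < n \<Longrightarrow> d dvd u $ i"
proof (induction "degree d" arbitrary: d u i rule: less_induct)
  case (less d u i)
  show ?case
  proof (cases "degree d = 0")
    case True
    with less.prems(2) show ?thesis by (simp add: is_unit_iff_degree unit_imp_dvd)
  next
    case False
    then obtain \<pi> where "\<pi> dvd d" and deg: "degree \<pi> > 0"
      and bezout: "\<And>v. \<not> \<pi> dvd v \<Longrightarrow> \<exists>s t. s * v + t * \<pi> = 1"
      using poly_bezout_divisor_exists[of d] by blast
    then obtain e where d: "d = \<pi> * e" by (elim dvdE)
    have pi0: "\<pi> \<noteq> 0" and e0: "e \<noteq> 0" using deg less.prems(2) d by auto
    have "\<pi> dvd u $ j" if "j < n" for j
    proof (rule right_coprime_prime_dvd_vec[OF A C cop less.prems(1) deg bezout _ _ that])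
      show "\<pi> dvd (A *\<^sub>v u) $ r" if "r < n" for r
        using less.prems(3)[OF that] d by (meson dvd_mult_left)
      show "\<pi> dvd (C *\<^sub>v u) $ r" if "r < p" for r
        using less.prems(4)[OF that] d by (meson dvd_mult_left)
    qed
    define v where "v = vec n (\<lambda>j. u $ j div \<pi>)"
    have v: "v \<in> carrier_vec n" unfolding v_def by simp
    have u: "u = \<pi> \<cdot>\<^sub>v v"
      using less.prems(1) \<open>\<And>j. j < n \<Longrightarrow> \<pi> dvd u $ j\<close> unfolding v_def by (intro eq_vecI) auto
    have e_dvd: "e dvd (M *\<^sub>v v) $ r"
      if M: "M \<in> carrier_mat k n" and r: "r < k" and "d dvd (M *\<^sub>v u) $ r" for M k r
    proof -
      have row: "row M r \<in> carrier_vec n" using M by (metis carrier_matD(2) row_carrier)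
      have "(M *\<^sub>v u) $ r = \<pi> * (M *\<^sub>v v) $ r"
        using M r unfolding u by (simp add: scalar_prod_smult_distrib[OF row v])
      with that(3) pi0 show ?thesis unfolding d by simp
    qed
    have "degree e < degree d" using d pi0 e0 deg by (simp add: degree_mult_eq)
    hence "e dvd v $ i"
      using less.hyps[OF _ v e0 e_dvd[OF A _ less.prems(3)] e_dvd[OF C _ less.prems(4)] less.prems(5)]
      by blast
    thus ?thesis using less.prems(1,5) unfolding u d by simp
  qed
qed

lemma fract_common_denominator:
  fixes f :: "nat \<Rightarrow> 'a::field ratf"
  obtains d u where "d \<noteq> 0" "\<And>j. j < n \<Longrightarrow> to_ratf (u j) = to_ratf d * f j"
proof -
  have "\<forall>j. \<exists>a b. b \<noteq> 0 \<and> f j = Fract a b"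
    by (metis Fract_cases)
  then obtain a b where ab: "\<And>j. b j \<noteq> 0 \<and> f j = Fract (a j) (b j)" by metis
  define d where "d = (\<Prod>j<n. b j)"
  define u where "u j = (\<Prod>k\<in>{..<n} - {j}. b k) * a j" for j
  have "to_ratf (u j) = to_ratf d * f j" if j: "j < n" for j
  proof -
    have "d = b j * (\<Prod>k\<in>{..<n} - {j}. b k)"
      unfolding d_def using prod.remove[of "{..<n}" j b] j by simp
    hence "to_ratf d * f j = Fract (b j * u j) (b j * 1)"
      using ab[of j] by (simp add: to_ratf_def u_def algebra_simps)
    also have "\<dots> = to_ratf (u j)"
      unfolding to_ratf_def by (rule mult_fract_cancel, use ab in auto)
    finally show ?thesis by simp
  qed
  moreover have "d \<noteq> 0" unfolding d_def using ab by auto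
  ultimately show ?thesis using that by blast
qed

lemma right_coprime_polynomial_vec:
  fixes A C :: "'a::field poly mat"
  assumes A: "A \<in> carrier_mat n n" and C: "C \<in> carrier_mat p n" and cop: "right_coprime A C"
    and h: "h \<in> carrier_vec n"
    and hA: "\<And>r. r < n \<Longrightarrow> (ratmat A *\<^sub>v h) $ r \<in> range to_ratf"
    and hC: "\<And>r. r < p \<Longrightarrow> (ratmat C *\<^sub>v h) $ r \<in> range to_ratf"
    and i: "i < n"
  shows "h $ i \<in> range to_ratf"
proof -
  obtain d u where d: "d \<noteq> 0" and du: "\<And>j. j < n \<Longrightarrow> to_ratf (u j) = to_ratf d * h $ j"
    using fract_common_denominator[of n "\<lambda>j. h $ j"] by metis
  define v where "v = vec n u"
  have v: "v \<in> carrier_vec n" unfolding v_def by simp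
  have v_h: "map_vec to_ratf v = to_ratf d \<cdot>\<^sub>v h"
    using h du unfolding v_def by (intro eq_vecI) auto
  have dvd: "d dvd (M *\<^sub>v v) $ r"
    if M: "M \<in> carrier_mat k n" and r: "r < k" and hM: "(ratmat M *\<^sub>v h) $ r \<in> range to_ratf" for M k r
  proof -
    obtain q where q: "(ratmat M *\<^sub>v h) $ r = to_ratf q" using hM by auto
    have "to_ratf ((M *\<^sub>v v) $ r) = (ratmat M *\<^sub>v map_vec to_ratf v) $ r"
      using M v r by (simp add: ratmat_mult_vec)
    also have "\<dots> = to_ratf (d * q)"
      using M h r q unfolding v_h by (simp add: mult_mat_vec to_ratf.hom_mult)
    finally show ?thesis by simp
  qed
  have "d dvd u i"
    using right_coprime_dvd_vec[OF A C cop v d dvd[OF A _ hA] dvd[OF C _ hC] i] i unfolding v_def by simp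
  then obtain q where "u i = d * q" by (elim dvdE)
  hence "h $ i = to_ratf q" using du[OF i] d by (auto simp: to_ratf.hom_mult)
  thus ?thesis by simp
qed

lemma right_coprime_uminus:
  assumes "right_coprime A C"
  shows "right_coprime A (- C)"
  unfolding right_coprime_def
proof (intro allI impI, elim conjE)
  fix R X Y
  assume R: "R \<in> carrier_mat (dim_col A) (dim_col A)" and X: "X \<in> carrier_mat (dim_row A) (dim_col A)"
    and Y: "Y \<in> carrier_mat (dim_row (- C)) (dim_col A)" and AX: "A = X * R" and CY: "- C = Y * R"
  have "C = (- Y) * R" using arg_cong[OF CY, of uminus] Y R by simp
  moreover have "- Y \<in> carrier_mat (dim_row C) (dim_col A)" using Y by simp
  ultimately show "unimodular R"
    using assms R X AX unfolding right_coprime_def by blast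
qed

section \<open>Degrees of rational functions and polynomial vectors\<close>

definition ratf_degree_le :: "'a::field ratf \<Rightarrow> nat \<Rightarrow> bool" where
  "ratf_degree_le x k \<longleftrightarrow> (\<exists>a b. b \<noteq> 0 \<and> x = Fract a b \<and> degree a \<le> degree b + k)"

lemma proper_ratf_iff_degree_le: "proper_ratf x \<longleftrightarrow> ratf_degree_le x 0"
  unfolding proper_ratf_def ratf_degree_le_def by simp

lemma ratf_degree_le_to_ratf [simp]: "ratf_degree_le (to_ratf q) k \<longleftrightarrow> degree q \<le> k"
proof
  assume "ratf_degree_le (to_ratf q) k"
  then obtain a b where b: "b \<noteq> 0" "to_ratf q = Fract a b" "degree a \<le> degree b + k"
    unfolding ratf_degree_le_def by auto
  hence "q * b = a" by (simp add: to_ratf_def eq_fract)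
  with b show "degree q \<le> k" by (cases "q = 0") (auto simp: degree_mult_eq)
next
  assume "degree q \<le> k"
  thus "ratf_degree_le (to_ratf q) k"
    unfolding ratf_degree_le_def to_ratf_def by (intro exI[of _ q] exI[of _ 1]) auto
qed

lemma ratf_degree_le_0 [simp]: "ratf_degree_le 0 k"
  using ratf_degree_le_to_ratf[of 0 k] by simp

lemma ratf_degree_le_uminus:
  assumes "ratf_degree_le x k"
  shows "ratf_degree_le (- x) k"
  using assms unfolding ratf_degree_le_def by (metis degree_minus minus_fract)

lemma ratf_degree_le_mult:
  assumes "ratf_degree_le x 0" "ratf_degree_le y k"
  shows "ratf_degree_le (x * y) k"
proof -
  from assms obtain a b c d where b: "b \<noteq> 0" "x = Fract a b" "degree a \<le> degree b"
    and d: "d \<noteq> 0" "y = Fract c d" "degree c \<le> degree d + k"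
    unfolding ratf_degree_le_def by auto
  have "degree (a * c) \<le> degree (b * d) + k"
    using b d degree_mult_le[of a c] by (simp add: degree_mult_eq)
  thus ?thesis unfolding ratf_degree_le_def using b d by (intro exI[of _ "a * c"] exI[of _ "b * d"]) auto
qed

lemma ratf_degree_le_add:
  assumes "ratf_degree_le x k" "ratf_degree_le y k"
  shows "ratf_degree_le (x + y) k"
proof -
  from assms obtain a b c d where b: "b \<noteq> 0" "x = Fract a b" "degree a \<le> degree b + k"
    and d: "d \<noteq> 0" "y = Fract c d" "degree c \<le> degree d + k"
    unfolding ratf_degree_le_def by auto
  have "degree (a * d + c * b) \<le> degree (b * d) + k"
    using b d degree_mult_le[of a d] degree_mult_le[of c b]
    by (intro degree_add_le) (simp_all add: degree_mult_eq)
  thus ?thesis unfolding ratf_degree_le_def using b d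
    by (intro exI[of _ "a * d + c * b"] exI[of _ "b * d"]) auto
qed

lemma ratf_degree_le_sum: "(\<And>i. i \<in> S \<Longrightarrow> ratf_degree_le (f i) k) \<Longrightarrow> ratf_degree_le (sum f S) k"
  by (induction S rule: infinite_finite_induct) (auto intro: ratf_degree_le_add)

lemma proper_mat_uminus: "proper_mat M \<Longrightarrow> proper_mat (- M)"
  unfolding proper_mat_def proper_ratf_iff_degree_le by (auto intro: ratf_degree_le_uminus)

lemma proper_mat_transpose: "proper_mat M \<Longrightarrow> proper_mat (transpose_mat M)"
  unfolding proper_mat_def by auto

lemma vdegree_le_iff: "vdegree v \<le> k \<longleftrightarrow> (\<forall>i < dim_vec v. degree (v $ i) \<le> k)"
  unfolding vdegree_def by (auto simp: Max_le_iff)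

lemma degree_le_vdegree: "i < dim_vec v \<Longrightarrow> degree (v $ i) \<le> vdegree v"
  using vdegree_le_iff[of v "vdegree v"] by auto

lemma order_eq_sum_vdegree: "order M = (\<Sum>j<dim_col M. vdegree (col M j))"
  unfolding order_def cols_def by (simp add: sum_list_sum_nth lessThan_atLeast0)

lemma vdegree_col_append_rows_ge:
  assumes K1: "K1 \<in> carrier_mat n l" and K2: "K2 \<in> carrier_mat m l" and j: "j < l"
  shows "vdegree (col K2 j) \<le> vdegree (col (K1 @\<^sub>r K2) j)"
  unfolding vdegree_le_iff
proof (intro allI impI)
  fix i assume i: "i < dim_vec (col K2 j)"
  have "degree (col K2 j $ i) = degree (col (K1 @\<^sub>r K2) j $ (n + i))"
    using K1 K2 i j by (auto simp: append_rows_def)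
  also have "\<dots> \<le> vdegree (col (K1 @\<^sub>r K2) j)"
    by (rule degree_le_vdegree) (use K1 K2 i j in auto)
  finally show "degree (col K2 j $ i) \<le> vdegree (col (K1 @\<^sub>r K2) j)" .
qed

text \<open>A proper rational matrix does not raise the degree of a polynomial vector.\<close>

lemma vdegree_col_append_rows_proper:
  assumes K1: "K1 \<in> carrier_mat n l" and K2: "K2 \<in> carrier_mat m l" and j: "j < l"
    and N: "N \<in> carrier_mat n m" "proper_mat N" and K1_eq: "ratmat K1 = N * ratmat K2"
  shows "vdegree (col (K1 @\<^sub>r K2) j) = vdegree (col K2 j)"
proof (rule antisym[OF _ vdegree_col_append_rows_ge[OF K1 K2 j]])
  let ?d = "vdegree (col K2 j)"
  have deg_K2: "degree (K2 $$ (k, j)) \<le> ?d" if "k < m" for k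
    using degree_le_vdegree[of k "col K2 j"] K2 j that by simp
  have deg_K1: "degree (K1 $$ (i, j)) \<le> ?d" if i: "i < n" for i
  proof -
    have "to_ratf (K1 $$ (i, j)) = (\<Sum>k<m. N $$ (i, k) * to_ratf (K2 $$ (k, j)))"
      using arg_cong[OF K1_eq, of "\<lambda>M. M $$ (i, j)"] K1 K2 N i j
      by (simp add: scalar_prod_def lessThan_atLeast0)
    moreover have "ratf_degree_le (\<Sum>k<m. N $$ (i, k) * to_ratf (K2 $$ (k, j))) ?d"
      using N i deg_K2 unfolding proper_mat_def proper_ratf_iff_degree_le
      by (intro ratf_degree_le_sum ratf_degree_le_mult) auto
    ultimately show ?thesis by (metis ratf_degree_le_to_ratf)
  qed
  show "vdegree (col (K1 @\<^sub>r K2) j) \<le> ?d"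
    unfolding vdegree_le_iff using K1 K2 j deg_K1 deg_K2 by (auto simp: append_rows_def)
qed

lemma order_append_rows_ge:
  assumes "K1 \<in> carrier_mat n l" "K2 \<in> carrier_mat m l"
  shows "order K2 \<le> order (K1 @\<^sub>r K2)"
  unfolding order_eq_sum_vdegree using assms vdegree_col_append_rows_ge[OF assms]
  by (auto intro!: sum_mono)

lemma degrees_append_rows_proper:
  assumes K1: "K1 \<in> carrier_mat n l" and K2: "K2 \<in> carrier_mat m l"
    and N: "N \<in> carrier_mat n m" "proper_mat N" and K1_eq: "ratmat K1 = N * ratmat K2"
  shows "order (K1 @\<^sub>r K2) = order K2" "col_degrees (K1 @\<^sub>r K2) = col_degrees K2"
proof -
  have "map vdegree (cols (K1 @\<^sub>r K2)) = map vdegree (cols K2)"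
    unfolding cols_def using K1 K2 vdegree_col_append_rows_proper[OF K1 K2 _ N K1_eq] by auto
  thus "order (K1 @\<^sub>r K2) = order K2" "col_degrees (K1 @\<^sub>r K2) = col_degrees K2"
    unfolding order_def col_degrees_def by auto
qed

section \<open>Polynomial system matrices\<close>

locale poly_system =
  fixes n m p :: nat and A B C D :: "'a::field poly mat" and G :: "'a ratf mat"
  assumes system: "is_polynomial_system_matrix n m p A B C D G"
begin

abbreviation "Ainv \<equiv> mat_inv (ratmat A)"

abbreviation "N \<equiv> Ainv * ratmat B"

abbreviation "P \<equiv> ratmat (system_matrix A B C D)"

lemma carriers [simp]:
  "A \<in> carrier_mat n n" "B \<in> carrier_mat n m" "C \<in> carrier_mat p n" "D \<in> carrier_mat p m"
  "G \<in> carrier_mat p m"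
  using system unfolding is_polynomial_system_matrix_def by auto

lemmas dims [simp] = carriers[THEN carrier_matD(1)] carriers[THEN carrier_matD(2)]

lemma ratmat_carriers [simp]:
  "ratmat A \<in> carrier_mat n n" "ratmat B \<in> carrier_mat n m" "ratmat C \<in> carrier_mat p n"
  "ratmat D \<in> carrier_mat p m" "- ratmat C \<in> carrier_mat p n"
  by simp_all

lemma det_A: "det (ratmat A) \<noteq> 0"
  using system unfolding is_polynomial_system_matrix_def ratmat_def to_ratf.hom_det by simp

lemmas Ainv = mat_inv_inverts[OF ratmat_carrier[THEN iffD2, OF carriers(1)] det_A]

lemmas Ainv_dims [simp] = carrier_matD[OF Ainv(1)]

lemma N_carrier [simp]: "N \<in> carrier_mat n m"
  using Ainv by simp

lemma P_eq: "P = four_block_mat (ratmat A) (ratmat B) (- ratmat C) (ratmat D)"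
  by (rule ratmat_system_matrix[OF carriers(1-4)])

lemma N_mult_vec: "x \<in> carrier_vec m \<Longrightarrow> N *\<^sub>v x = Ainv *\<^sub>v (ratmat B *\<^sub>v x)"
  by (rule assoc_mult_mat_vec[OF Ainv(1)]) simp_all

lemma G_mult_vec:
  assumes x: "x \<in> carrier_vec m"
  shows "G *\<^sub>v x = ratmat D *\<^sub>v x + ratmat C *\<^sub>v (N *\<^sub>v x)"
proof -
  have "G = ratmat D + ratmat C * N"
    using system Ainv unfolding is_polynomial_system_matrix_def by (simp add: assoc_mult_mat[of _ p n _ n _ m])
  moreover have "(ratmat C * N) *\<^sub>v x = ratmat C *\<^sub>v (N *\<^sub>v x)"
    by (rule assoc_mult_mat_vec[of _ p n _ m]) (simp_all add: x)
  moreover have "ratmat C * N \<in> carrier_mat p m" by (rule mult_carrier_mat[of _ p n]) simp_all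
  ultimately show ?thesis
    using add_mult_distrib_mat_vec[of "ratmat D" p m "ratmat C * N" x] x by simp
qed

lemma P_mult_append_vec_eq_0_iff:
  assumes x1: "x1 \<in> carrier_vec n" and x2: "x2 \<in> carrier_vec m"
  shows "P *\<^sub>v (x1 @\<^sub>v x2) = 0\<^sub>v (n + p) \<longleftrightarrow> x1 = - (N *\<^sub>v x2) \<and> G *\<^sub>v x2 = 0\<^sub>v p"
proof -
  have top: "ratmat A *\<^sub>v x1 + ratmat B *\<^sub>v x2 \<in> carrier_vec n"
    using x1 x2 by (metis add_carrier_vec mult_mat_vec_carrier ratmat_carriers(1,2))
  have "P *\<^sub>v (x1 @\<^sub>v x2) = (ratmat A *\<^sub>v x1 + ratmat B *\<^sub>v x2) @\<^sub>v ((- ratmat C) *\<^sub>v x1 + ratmat D *\<^sub>v x2)"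
    unfolding P_eq by (rule four_block_mat_mult_vec[OF ratmat_carriers(1,2,5,4) x1 x2])
  moreover have "0\<^sub>v (n + p) = 0\<^sub>v n @\<^sub>v (0\<^sub>v p :: 'a ratf vec)"
    by (intro eq_vecI) auto
  ultimately have split: "P *\<^sub>v (x1 @\<^sub>v x2) = 0\<^sub>v (n + p) \<longleftrightarrow>
      ratmat A *\<^sub>v x1 + ratmat B *\<^sub>v x2 = 0\<^sub>v n \<and> (- ratmat C) *\<^sub>v x1 + ratmat D *\<^sub>v x2 = 0\<^sub>v p"
    using append_vec_eq[OF top zero_carrier_vec] by presburger
  have "ratmat A *\<^sub>v x1 + ratmat B *\<^sub>v x2 = 0\<^sub>v n \<longleftrightarrow> x1 = - (N *\<^sub>v x2)"
    using invertible_mult_vec_add_eq_0_iff[OF ratmat_carriers(1) Ainv(1-3) x1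
          mult_mat_vec_carrier[OF ratmat_carriers(2) x2]]
    by (simp add: N_mult_vec x2)
  moreover have "(- ratmat C) *\<^sub>v (- (N *\<^sub>v x2)) + ratmat D *\<^sub>v x2 = G *\<^sub>v x2"
  proof -
    have "(- ratmat C) *\<^sub>v (- (N *\<^sub>v x2)) = ratmat C *\<^sub>v (N *\<^sub>v x2)"
      using mult_mat_vec_uminus[OF ratmat_carriers(3) mult_mat_vec_carrier[OF N_carrier x2]] by simp
    thus ?thesis
      using G_mult_vec[OF x2] x2 by (metis comm_add_vec mult_mat_vec_carrier N_carrier ratmat_carriers(3,4))
  qed
  ultimately show ?thesis unfolding split by metis
qed

lemma P_carrier [simp]: "P \<in> carrier_mat (n + p) (n + m)"
  unfolding P_eq by (rule four_block_carrier_mat) simp_all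

lemma dims_P_G [simp]: "dim_row P = n + p" "dim_col P = n + m" "dim_row G = p" "dim_col G = m"
  using P_carrier carriers(5) by auto

lemma N_mult_vec_carrier [simp]: "x \<in> carrier_vec m \<Longrightarrow> N *\<^sub>v x \<in> carrier_vec n"
  using mult_mat_vec_carrier[OF N_carrier] .

lemma right_null_P: "right_null P = {x \<in> carrier_vec (n + m). P *\<^sub>v x = 0\<^sub>v (n + p)}"
  unfolding right_null_def by (simp only: carrier_matD[OF P_carrier])

lemma right_null_G: "right_null G = {x \<in> carrier_vec m. G *\<^sub>v x = 0\<^sub>v p}"
  unfolding right_null_def by simp

definition lift_vec :: "'a ratf vec \<Rightarrow> 'a ratf vec" where
  "lift_vec x = (- (N *\<^sub>v x)) @\<^sub>v x"

lemma lift_vec_carrier: "x \<in> carrier_vec m \<Longrightarrow> lift_vec x \<in> carrier_vec (n + m)"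
  unfolding lift_vec_def by simp

lemma lift_vec_eq_iff:
  assumes "x \<in> carrier_vec m" "y \<in> carrier_vec m"
  shows "lift_vec x = lift_vec y \<longleftrightarrow> x = y"
  using append_vec_eq[of "- (N *\<^sub>v x)" n "- (N *\<^sub>v y)" x y] assms unfolding lift_vec_def by auto

lemma lift_vec_0: "lift_vec (0\<^sub>v m) = 0\<^sub>v (n + m)"
  unfolding lift_vec_def by (intro eq_vecI) auto

lemma right_null_P_eq: "right_null P = lift_vec ` right_null G"
proof (intro equalityI subsetI)
  fix x assume x: "x \<in> right_null P"
  define x2 where "x2 = vec_last x m"
  have x2: "x2 \<in> carrier_vec m" unfolding x2_def by simp
  have split: "x = vec_first x n @\<^sub>v x2" using x unfolding x2_def right_null_P by simp
  have "P *\<^sub>v (vec_first x n @\<^sub>v x2) = 0\<^sub>v (n + p)"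
    using x unfolding right_null_P by (simp add: split[symmetric])
  hence "vec_first x n = - (N *\<^sub>v x2)" "x2 \<in> right_null G"
    using P_mult_append_vec_eq_0_iff[OF vec_first_carrier[of x n] x2] x2 unfolding right_null_G by auto
  hence "x = lift_vec x2" "x2 \<in> right_null G" using split unfolding lift_vec_def by auto
  thus "x \<in> lift_vec ` right_null G" by blast
next
  fix x assume "x \<in> lift_vec ` right_null G"
  then obtain y where y: "y \<in> carrier_vec m" "G *\<^sub>v y = 0\<^sub>v p" and x: "x = lift_vec y"
    unfolding right_null_G by auto
  have "P *\<^sub>v lift_vec y = 0\<^sub>v (n + p)"
    unfolding lift_vec_def using P_mult_append_vec_eq_0_iff[OF _ y(1)] y(2) N_carrier y(1) by simp
  thus "x \<in> right_null P" unfolding x right_null_P using lift_vec_carrier[OF y(1)] by simp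
qed

lemma inj_on_lift_vec: "inj_on lift_vec (carrier_vec m)"
  by (rule inj_onI) (simp add: lift_vec_eq_iff)

lemma append_vec_in_right_null_P_iff:
  assumes "x1 \<in> carrier_vec n" "x2 \<in> carrier_vec m"
  shows "x1 @\<^sub>v x2 \<in> right_null P \<longleftrightarrow> x1 = - (N *\<^sub>v x2) \<and> x2 \<in> right_null G"
  using P_mult_append_vec_eq_0_iff[OF assms] assms unfolding right_null_P right_null_G by auto

lemma append_rows_mult_vec_eq_lift_vec:
  assumes K1: "K1 \<in> carrier_mat n l" and K2: "K2 \<in> carrier_mat m l"
    and eq: "ratmat K1 = - (N * ratmat K2)" and c: "c \<in> carrier_vec l"
  shows "ratmat (K1 @\<^sub>r K2) *\<^sub>v c = lift_vec (ratmat K2 *\<^sub>v c)"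
proof -
  have "ratmat K1 *\<^sub>v c = - (N *\<^sub>v (ratmat K2 *\<^sub>v c))"
    unfolding eq using K2 c by (simp add: assoc_mult_mat_vec[OF N_carrier, of _ l])
  thus ?thesis unfolding ratmat_append_rows_mult_vec[OF K1 K2 c] lift_vec_def by simp
qed

lemma image_append_rows_mult_vec:
  assumes "K1 \<in> carrier_mat n l" "K2 \<in> carrier_mat m l" "ratmat K1 = - (N * ratmat K2)"
  shows "(\<lambda>c. ratmat (K1 @\<^sub>r K2) *\<^sub>v c) ` carrier_vec l = lift_vec ` (\<lambda>c. ratmat K2 *\<^sub>v c) ` carrier_vec l"
  unfolding image_image using append_rows_mult_vec_eq_lift_vec[OF assms] by (intro image_cong) auto

lemma poly_basis_append_rows_eq:
  assumes K1: "K1 \<in> carrier_mat n l" and K2: "K2 \<in> carrier_mat m l"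
    and pb: "poly_basis (n + m) (right_null P) (K1 @\<^sub>r K2)"
  shows "ratmat K1 = - (N * ratmat K2)"
proof (rule mat_eq_iff_mult_vec[of _ n l])
  fix c :: "'a ratf vec" assume c: "c \<in> carrier_vec l"
  have "(ratmat K1 *\<^sub>v c) @\<^sub>v (ratmat K2 *\<^sub>v c) \<in> right_null P"
    using pb c K1 K2 unfolding poly_basis_iff ratmat_append_rows_mult_vec[OF K1 K2 c, symmetric] by auto
  hence "ratmat K1 *\<^sub>v c = - (N *\<^sub>v (ratmat K2 *\<^sub>v c))"
    using append_vec_in_right_null_P_iff ratmat_mult_vec_carrier[OF K1] ratmat_mult_vec_carrier[OF K2] by blast
  thus "ratmat K1 *\<^sub>v c = - (N * ratmat K2) *\<^sub>v c"
    using K2 c by (simp add: assoc_mult_mat_vec[OF N_carrier, of _ l])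
qed (use K1 K2 in auto)

lemma poly_basis_append_rows_iff:
  assumes K1: "K1 \<in> carrier_mat n l" and K2: "K2 \<in> carrier_mat m l"
  shows "poly_basis (n + m) (right_null P) (K1 @\<^sub>r K2) \<longleftrightarrow>
    ratmat K1 = - (N * ratmat K2) \<and> poly_basis m (right_null G) K2"
proof -
  let ?K = "\<lambda>c. ratmat (K1 @\<^sub>r K2) *\<^sub>v c" and ?K2 = "\<lambda>c. ratmat K2 *\<^sub>v c"
  note lift = append_rows_mult_vec_eq_lift_vec[OF K1 K2] and image = image_append_rows_mult_vec[OF K1 K2]
  have K2_in: "?K2 ` carrier_vec l \<subseteq> carrier_vec m" using ratmat_mult_vec_carrier[OF K2] by auto
  show ?thesis
  proof
    assume pb: "poly_basis (n + m) (right_null P) (K1 @\<^sub>r K2)"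
    hence indep: "\<And>c. c \<in> carrier_vec l \<Longrightarrow> ?K c = 0\<^sub>v (n + m) \<Longrightarrow> c = 0\<^sub>v l"
      and span: "right_null P = ?K ` carrier_vec l"
      unfolding poly_basis_iff using K1 K2 by auto
    note eq = poly_basis_append_rows_eq[OF K1 K2 pb]
    have indep2: "c = 0\<^sub>v l" if "c \<in> carrier_vec l" "?K2 c = 0\<^sub>v m" for c
    proof (rule indep[OF that(1)])
      show "?K c = 0\<^sub>v (n + m)" unfolding lift[OF eq that(1)] that(2) by (rule lift_vec_0)
    qed
    have "lift_vec ` right_null G = lift_vec ` ?K2 ` carrier_vec l"
      using span right_null_P_eq image[OF eq] by simp
    moreover have "right_null G \<subseteq> carrier_vec m" by (auto simp: right_null_G)
    ultimately have "right_null G = ?K2 ` carrier_vec l"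
      using inj_on_image_eq_iff[OF inj_on_lift_vec _ K2_in] by simp
    thus "ratmat K1 = - (N * ratmat K2) \<and> poly_basis m (right_null G) K2"
      unfolding poly_basis_iff using eq K2 indep2 by auto
  next
    assume "ratmat K1 = - (N * ratmat K2) \<and> poly_basis m (right_null G) K2"
    hence eq: "ratmat K1 = - (N * ratmat K2)"
      and indep: "\<And>c. c \<in> carrier_vec l \<Longrightarrow> ?K2 c = 0\<^sub>v m \<Longrightarrow> c = 0\<^sub>v l"
      and span: "right_null G = ?K2 ` carrier_vec l"
      unfolding poly_basis_iff using K2 by auto
    have "c = 0\<^sub>v l" if "c \<in> carrier_vec l" "?K c = 0\<^sub>v (n + m)" for c
    proof (rule indep[OF that(1)])
      have "lift_vec (?K2 c) = lift_vec (0\<^sub>v m)"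
        using that(2) unfolding lift[OF eq that(1)] lift_vec_0 .
      thus "?K2 c = 0\<^sub>v m" using lift_vec_eq_iff[OF ratmat_mult_vec_carrier[OF K2]] by simp
    qed
    moreover have "right_null P = ?K ` carrier_vec l"
      unfolding right_null_P_eq span image[OF eq] ..
    ultimately show "poly_basis (n + m) (right_null P) (K1 @\<^sub>r K2)"
      unfolding poly_basis_iff using K1 K2 by auto
  qed
qed

lemma N_mult_polynomial_vec:
  assumes cop: "right_coprime A C" and y: "y \<in> carrier_vec m"
    and null: "G *\<^sub>v map_vec to_ratf y = 0\<^sub>v p" and i: "i < n"
  shows "(N *\<^sub>v map_vec to_ratf y) $ i \<in> range to_ratf"
proof -
  let ?x = "map_vec to_ratf y"
  have x: "?x \<in> carrier_vec m" using y by simp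
  have "ratmat A *\<^sub>v (N *\<^sub>v ?x) = (ratmat A * Ainv) *\<^sub>v (ratmat B *\<^sub>v ?x)"
    using assoc_mult_mat_vec[OF ratmat_carriers(1) Ainv(1) ratmat_mult_vec_carrier[OF carriers(2)]]
    by (simp add: N_mult_vec[OF x])
  also have "\<dots> = map_vec to_ratf (B *\<^sub>v y)"
    using Ainv(2) ratmat_mult_vec[OF carriers(2) y] mult_mat_vec_carrier[OF carriers(2) y] by simp
  finally have hA: "(ratmat A *\<^sub>v (N *\<^sub>v ?x)) $ r \<in> range to_ratf" if "r < n" for r
    using that by simp
  have "ratmat D *\<^sub>v ?x + ratmat C *\<^sub>v (N *\<^sub>v ?x) = 0\<^sub>v p"
    using null G_mult_vec[OF x] by simp
  hence "ratmat C *\<^sub>v (N *\<^sub>v ?x) = - (ratmat D *\<^sub>v ?x)"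
    by (rule add_eq_0_iff_vec[OF ratmat_mult_vec_carrier[OF carriers(4)]
          ratmat_mult_vec_carrier[OF carriers(3)], THEN iffD1])
  hence "ratmat C *\<^sub>v (N *\<^sub>v ?x) = - map_vec to_ratf (D *\<^sub>v y)"
    using ratmat_mult_vec[OF carriers(4) y] by simp
  hence hC: "(ratmat C *\<^sub>v (N *\<^sub>v ?x)) $ r \<in> range to_ratf" if "r < p" for r
    using that by (simp add: to_ratf.hom_uminus[symmetric])
  show ?thesis
    by (rule right_coprime_polynomial_vec[OF carriers(1,3) cop N_mult_vec_carrier[OF x] hA hC i])
qed

lemma N_mult_polynomial:
  assumes cop: "right_coprime A C" and K: "K \<in> carrier_mat m l" and null: "G * ratmat K = 0\<^sub>m p l"
  obtains K1 where "K1 \<in> carrier_mat n l" "ratmat K1 = - (N * ratmat K)"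
proof (rule polynomial_ratmatE)
  show "- (N * ratmat K) \<in> carrier_mat n l" using mult_carrier_mat[OF N_carrier] K by simp
  fix i j assume i: "i < n" and j: "j < l"
  have col: "col (ratmat K) j = map_vec to_ratf (col K j)" unfolding ratmat_def using K j by simp
  have "G *\<^sub>v map_vec to_ratf (col K j) = 0\<^sub>v p"
    using arg_cong[OF null, of "\<lambda>M. col M j"] col K j by (simp add: col_mult2[of _ p m _ l])
  from N_mult_polynomial_vec[OF cop col_carrier_vec[OF j K] this i]
  obtain q where "(N *\<^sub>v map_vec to_ratf (col K j)) $ i = to_ratf q" by auto
  moreover have "(- (N * ratmat K)) $$ (i, j) = - (N *\<^sub>v col (ratmat K) j) $ i"
    using K i j by simp
  ultimately have "(- (N * ratmat K)) $$ (i, j) = to_ratf (- q)"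
    using col by (simp add: to_ratf.hom_uminus)
  thus "(- (N * ratmat K)) $$ (i, j) \<in> range to_ratf" by simp
qed

lemma poly_basis_lift:
  assumes cop: "right_coprime A C" and proper: "proper_mat N" and H: "poly_basis m (right_null G) H"
  obtains K1 where "K1 \<in> carrier_mat n (dim_col H)" "ratmat K1 = - (N * ratmat H)"
    "poly_basis (n + m) (right_null P) (K1 @\<^sub>r H)"
    "order (K1 @\<^sub>r H) = order H" "col_degrees (K1 @\<^sub>r H) = col_degrees H"
proof -
  have Hc: "H \<in> carrier_mat m (dim_col H)" using H unfolding poly_basis_def by auto
  obtain K1 where K1: "K1 \<in> carrier_mat n (dim_col H)" and eq: "ratmat K1 = - (N * ratmat H)"
    using N_mult_polynomial[OF cop Hc] poly_basis_mult_eq_0[OF H] by auto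
  have "ratmat K1 = (- N) * ratmat H" using eq Hc by simp
  note degrees = degrees_append_rows_proper[OF K1 Hc _ proper_mat_uminus[OF proper] this]
  show thesis
    using that[OF K1 eq _ degrees] poly_basis_append_rows_iff[OF K1 Hc] eq H by simp
qed

lemma poly_basis_P_order_ge:
  assumes K: "poly_basis (n + m) (right_null P) K"
  obtains K2 where "poly_basis m (right_null G) K2" "order K2 \<le> order K"
proof -
  have "K \<in> carrier_mat (n + m) (dim_col K)" using K unfolding poly_basis_def by auto
  then obtain K1 K2 where K1: "K1 \<in> carrier_mat n (dim_col K)" and K2: "K2 \<in> carrier_mat m (dim_col K)"
    and K_eq: "K = K1 @\<^sub>r K2" by (rule append_rows_split)
  show thesis
  proof (rule that)
    show "poly_basis m (right_null G) K2"
      using K poly_basis_append_rows_iff[OF K1 K2] unfolding K_eq by simp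
    show "order K2 \<le> order K" unfolding K_eq by (rule order_append_rows_ge[OF K1 K2])
  qed
qed

lemma minimal_basis_append_rows:
  assumes cop: "right_coprime A C" and proper: "proper_mat N"
    and K1: "K1 \<in> carrier_mat n l" and K2: "K2 \<in> carrier_mat m l"
    and mb: "minimal_basis (n + m) (right_null P) (K1 @\<^sub>r K2)"
  shows "minimal_basis m (right_null G) K2" "ratmat K1 = - (N * ratmat K2)"
proof -
  from mb poly_basis_append_rows_iff[OF K1 K2]
  have eq: "ratmat K1 = - (N * ratmat K2)" and pb: "poly_basis m (right_null G) K2"
    unfolding minimal_basis_def by auto
  show "ratmat K1 = - (N * ratmat K2)" by (rule eq)
  have "order K2 \<le> order H" if H: "poly_basis m (right_null G) H" for H
  proof -
    obtain H1 where "poly_basis (n + m) (right_null P) (H1 @\<^sub>r H)" "order (H1 @\<^sub>r H) = order H"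
      by (rule poly_basis_lift[OF cop proper H])
    with mb order_append_rows_ge[OF K1 K2] show ?thesis unfolding minimal_basis_def by fastforce
  qed
  with pb show "minimal_basis m (right_null G) K2" unfolding minimal_basis_def by simp
qed

lemma minimal_basis_lift:
  assumes cop: "right_coprime A C" and proper: "proper_mat N" and mb: "minimal_basis m (right_null G) H"
  obtains K1 where "minimal_basis (n + m) (right_null P) (K1 @\<^sub>r H)"
    "col_degrees (K1 @\<^sub>r H) = col_degrees H"
proof -
  from mb have H: "poly_basis m (right_null G) H" unfolding minimal_basis_def by simp
  obtain K1 where pb: "poly_basis (n + m) (right_null P) (K1 @\<^sub>r H)"
    and order: "order (K1 @\<^sub>r H) = order H" and degrees: "col_degrees (K1 @\<^sub>r H) = col_degrees H"
    by (rule poly_basis_lift[OF cop proper H])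
  have least: "order (K1 @\<^sub>r H) \<le> order K" if K: "poly_basis (n + m) (right_null P) K" for K
  proof -
    obtain K2 where "poly_basis m (right_null G) K2" "order K2 \<le> order K"
      by (rule poly_basis_P_order_ge[OF K])
    with mb order show ?thesis unfolding minimal_basis_def by fastforce
  qed
  show thesis by (rule that[of K1]) (use pb degrees least in \<open>auto simp: minimal_basis_def\<close>)
qed

lemma right_minimal_indices_P_G:
  assumes cop: "right_coprime A C" and proper: "proper_mat N"
  shows "right_minimal_indices P = right_minimal_indices G"
proof -
  have "(\<exists>K. minimal_basis (n + m) (right_null P) K \<and> col_degrees K = M) \<longleftrightarrow>
        (\<exists>H. minimal_basis m (right_null G) H \<and> col_degrees H = M)" for M
  proof
    assume "\<exists>K. minimal_basis (n + m) (right_null P) K \<and> col_degrees K = M"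
    then obtain K where mb: "minimal_basis (n + m) (right_null P) K" and M: "col_degrees K = M" by blast
    have "K \<in> carrier_mat (n + m) (dim_col K)" using mb unfolding minimal_basis_def poly_basis_def by auto
    then obtain K1 K2 where K1: "K1 \<in> carrier_mat n (dim_col K)" and K2: "K2 \<in> carrier_mat m (dim_col K)"
      and K_eq: "K = K1 @\<^sub>r K2" by (rule append_rows_split)
    note mb' = minimal_basis_append_rows[OF cop proper K1 K2 mb[unfolded K_eq]]
    have "ratmat K1 = (- N) * ratmat K2" using mb'(2) K2 by simp
    from degrees_append_rows_proper(2)[OF K1 K2 _ proper_mat_uminus[OF proper] this]
    show "\<exists>H. minimal_basis m (right_null G) H \<and> col_degrees H = M"
      using mb'(1) M K_eq by auto
  next
    assume "\<exists>H. minimal_basis m (right_null G) H \<and> col_degrees H = M"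
    then obtain H where mb: "minimal_basis m (right_null G) H" and M: "col_degrees H = M" by blast
    obtain K1 where "minimal_basis (n + m) (right_null P) (K1 @\<^sub>r H)" "col_degrees (K1 @\<^sub>r H) = col_degrees H"
      by (rule minimal_basis_lift[OF cop proper mb])
    thus "\<exists>K. minimal_basis (n + m) (right_null P) K \<and> col_degrees K = M" using M by auto
  qed
  thus ?thesis unfolding right_minimal_indices_def minimal_indices_def dims_P_G(2,4) by simp
qed

lemma right_minimal_bases:
  assumes "right_coprime A C" "proper_mat N"
    and "H1 \<in> carrier_mat n l" "H2 \<in> carrier_mat m l" "right_minimal_basis P (H1 @\<^sub>r H2)"
  shows "right_minimal_basis G H2 \<and> ratmat H1 = - (N * ratmat H2)"
  using minimal_basis_append_rows[OF assms(1-4)] assms(5)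
  unfolding right_minimal_basis_def dims_P_G(2,4) by simp

lemma mat_inv_transpose_A: "mat_inv (transpose_mat (ratmat A)) = transpose_mat Ainv"
  by (rule mat_inv_transpose[OF ratmat_carriers(1) det_A])

lemma transpose_N: "mat_inv (ratmat (transpose_mat A)) * ratmat (- transpose_mat C) = - transpose_mat (ratmat C * Ainv)"
  using Ainv(1) by (simp add: mat_inv_transpose_A ratmat_uminus ratmat_transpose transpose_mult[of _ p n _ n])

lemma transpose_P:
  "ratmat (system_matrix (transpose_mat A) (- transpose_mat C) (- transpose_mat B) (transpose_mat D))
    = transpose_mat P"
  unfolding ratmat_def system_matrix_def by (intro eq_matI) (auto simp: to_ratf.hom_uminus)

lemma transpose_system:
  "poly_system n p m (transpose_mat A) (- transpose_mat C) (- transpose_mat B) (transpose_mat D) (transpose_mat G)"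
proof
  have CA: "ratmat C * Ainv \<in> carrier_mat p n" using mult_carrier_mat[OF _ Ainv(1)] by simp
  have "G = ratmat D + ratmat C * Ainv * ratmat B"
    using system unfolding is_polynomial_system_matrix_def by simp
  hence "transpose_mat G = transpose_mat (ratmat D) + transpose_mat (ratmat B) * transpose_mat (ratmat C * Ainv)"
    using transpose_add[OF ratmat_carriers(4) mult_carrier_mat[OF CA ratmat_carriers(2)]]
      transpose_mult[OF CA ratmat_carriers(2)] by simp
  also have "transpose_mat (ratmat C * Ainv) = transpose_mat Ainv * transpose_mat (ratmat C)"
    using transpose_mult[OF ratmat_carriers(3) Ainv(1)] .
  also have "transpose_mat (ratmat B) * (transpose_mat Ainv * transpose_mat (ratmat C))
      = (- transpose_mat (ratmat B)) * transpose_mat Ainv * (- transpose_mat (ratmat C))"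
    using Ainv(1) by (simp add: assoc_mult_mat[of _ m n _ n _ p])
  finally have GT: "transpose_mat G = ratmat (transpose_mat D) +
      ratmat (- transpose_mat B) * mat_inv (ratmat (transpose_mat A)) * ratmat (- transpose_mat C)"
    by (simp add: mat_inv_transpose_A ratmat_uminus ratmat_transpose)
  have "det (transpose_mat A) \<noteq> 0"
    using system det_transpose[OF carriers(1)] unfolding is_polynomial_system_matrix_def by simp
  show "is_polynomial_system_matrix n p m (transpose_mat A) (- transpose_mat C) (- transpose_mat B)
      (transpose_mat D) (transpose_mat G)"
    unfolding is_polynomial_system_matrix_def using \<open>det (transpose_mat A) \<noteq> 0\<close> by (simp add: GT[symmetric])
qed

end

theorem theorem3p6:
  fixes A B C D :: "'a::field poly mat" and G :: "'a ratf mat"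
    and n m p :: nat
  assumes psm: "is_polynomial_system_matrix n m p A B C D G"
  shows
    "(right_coprime A C \<and> proper_mat (mat_inv (ratmat A) * ratmat B) \<longrightarrow>
       (\<forall>l H1 H2. H1 \<in> carrier_mat n l \<and> H2 \<in> carrier_mat m l \<and>
          right_minimal_basis (ratmat (system_matrix A B C D)) (H1 @\<^sub>r H2) \<longrightarrow>
          right_minimal_basis G H2 \<and>
          ratmat H1 = - (mat_inv (ratmat A) * ratmat B * ratmat H2))
       \<and> right_minimal_indices (ratmat (system_matrix A B C D)) = right_minimal_indices G)
   \<and>
    (left_coprime A B \<and> proper_mat (ratmat C * mat_inv (ratmat A)) \<longrightarrow>
       (\<forall>q H1 H2. H1 \<in> carrier_mat n q \<and> H2 \<in> carrier_mat p q \<and>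
          left_minimal_basis (ratmat (system_matrix A B C D)) (H1 @\<^sub>r H2) \<longrightarrow>
          left_minimal_basis G H2 \<and>
          ratmat H1 = transpose_mat (ratmat C * mat_inv (ratmat A)) * ratmat H2)
       \<and> left_minimal_indices (ratmat (system_matrix A B C D)) = left_minimal_indices G)"
proof -
  interpret sys: poly_system n m p A B C D G by (rule poly_system.intro[OF psm])
  interpret dual: poly_system n p m "transpose_mat A" "- transpose_mat C" "- transpose_mat B"
    "transpose_mat D" "transpose_mat G" by (rule sys.transpose_system)
  have left: "right_coprime (transpose_mat A) (- transpose_mat B)" "proper_mat dual.N"
    if "left_coprime A B" "proper_mat (ratmat C * mat_inv (ratmat A))"
    using that right_coprime_uminus proper_mat_uminus proper_mat_transpose
    unfolding left_coprime_def sys.transpose_N by auto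
  have "ratmat H1 = transpose_mat (ratmat C * mat_inv (ratmat A)) * ratmat H2"
    if "ratmat H1 = - (dual.N * ratmat H2)" "H2 \<in> carrier_mat p q" for H1 H2 :: "'a poly mat" and q
    using that sys.Ainv(1) unfolding sys.transpose_N by simp
  thus ?thesis
    using sys.right_minimal_bases sys.right_minimal_indices_P_G
      dual.right_minimal_bases[OF left] dual.right_minimal_indices_P_G[OF left]
    unfolding left_minimal_basis_iff_transpose left_minimal_indices_eq_transpose sys.transpose_P
    by blast
qed

end
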